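(* Every derivable sequent $\Gamma\vdash A$ of the sequent calculus has exactly one focused derivation.
   Context: Formulas are built from atoms ($p,q,\dots$) by a binary product: every formula is an atom or $A\bullet B$. A context is a finite (possibly empty) list of formulas; commas denote concatenation. The sequent calculus has exactly four rules (no weakening, contraction or exchange): ($\bullet L$) from $A,B,\Delta\vdash C$ infer $A\bullet B,\Delta\vdash C$ (the product must be the leftmost formula); ($\bullet R$) from $\Gamma\vdash A$ and $\Delta\vdash B$ infer $\Gamma,\Delta\vdash A\bullet B$; ($id$) $A\vdash A$; ($cut$) from $\Theta\vdash A$ and $\Gamma,A,\Delta\vdash B$ infer $\Gamma,\Theta,\Delta\vdash B$. A derivation is a finite rooted tree whose nodes are labelled by rule instances and whose edges are labelled by sequents; a sequent is derivable if it is the conclusion of a derivation with no undischarged premises. A context is irreducible if its leftmost formula is not a product (it is empty or begins with an atom). A focused derivation is a derivation (with no undischarged premises) using only: ($\bullet L$); ($\bullet R^{foc}$): from $\Gamma\vdash A$ and $\Delta\vdash B$ infer $\Gamma,\Delta\vdash A\bullet B$, where $\Gamma$ is irreducible; and ($id^{atm}$): $p\vdash p$ for atoms $p$. *)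

theory Defs
  imports Main
begin

datatype 'a fma = At 'a | Prod "'a fma" "'a fma"

inductive derivable :: "'a fma list \<Rightarrow> 'a fma \<Rightarrow> bool" where
  id: "derivable [A] A"
| prodL: "derivable (A # B # \<Delta>) C \<Longrightarrow> derivable (Prod A B # \<Delta>) C"
| prodR: "derivable \<Gamma> A \<Longrightarrow> derivable \<Delta> B \<Longrightarrow> derivable (\<Gamma> @ \<Delta>) (Prod A B)"
| cut: "derivable \<Theta> A \<Longrightarrow> derivable (\<Gamma> @ A # \<Delta>) B \<Longrightarrow> derivable (\<Gamma> @ \<Theta> @ \<Delta>) B"

fun irreducible :: "'a fma list \<Rightarrow> bool" where
  "irreducible [] = True"
| "irreducible (At p # _) = True"
| "irreducible (Prod _ _ # _) = False"

datatype 'a fder =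
    IdAtm 'a
  | ProdL "'a fma" "'a fma" "'a fma list" "'a fma" "'a fder"
  | ProdRfoc "'a fma list" "'a fma list" "'a fma" "'a fma" "'a fder" "'a fder"

fun fconcl :: "'a fder \<Rightarrow> 'a fma list \<times> 'a fma" where
  "fconcl (IdAtm p) = ([At p], At p)"
| "fconcl (ProdL A B \<Delta> C d) = (Prod A B # \<Delta>, C)"
| "fconcl (ProdRfoc \<Gamma> \<Delta> A B d1 d2) = (\<Gamma> @ \<Delta>, Prod A B)"

fun fwf :: "'a fder \<Rightarrow> bool" where
  "fwf (IdAtm p) = True"
| "fwf (ProdL A B \<Delta> C d) = (fwf d \<and> fconcl d = (A # B # \<Delta>, C))"
| "fwf (ProdRfoc \<Gamma> \<Delta> A B d1 d2) =
     (irreducible \<Gamma> \<and> fwf d1 \<and> fwf d2 \<and> fconcl d1 = (\<Gamma>, A) \<and> fconcl d2 = (\<Delta>, B))"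

definition focused_derivation_of :: "'a fder \<Rightarrow> 'a fma list \<Rightarrow> 'a fma \<Rightarrow> bool" where
  "focused_derivation_of d \<Gamma> A \<longleftrightarrow> fwf d \<and> fconcl d = (\<Gamma>, A)"

end

theory Submission
  imports Defs
begin

text \<open>Uniqueness: the conclusion of a focused derivation determines its last rule. A context
  beginning with a product forces (prod L); otherwise the goal decides between (id atm) and
  (prod R foc), and in the latter the split of the context is forced, because the atoms of the
  left part must spell out the atoms of the left factor and every formula has at least one atom.

  Existence: focused derivability is closed under unrestricted (prod R), under (id), and under
  (cut); the last is shown by induction on the cut formula, whose principal case reduces a cut
  on a product to cuts on its factors.\<close>

fun atoms :: "'a fma \<Rightarrow> 'a list" where
  "atoms (At p) = [p]"
| "atoms (Prod A B) = atoms A @ atoms B"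

definition ctx_atoms :: "'a fma list \<Rightarrow> 'a list" where
  "ctx_atoms \<Gamma> = concat (map atoms \<Gamma>)"

lemma atoms_not_Nil: "atoms A \<noteq> []"
  by (induction A) auto

lemma ctx_atoms_eq_Nil_iff: "ctx_atoms \<Gamma> = [] \<longleftrightarrow> \<Gamma> = []"
  by (simp add: ctx_atoms_def atoms_not_Nil)

lemma append_eq_append_ctx_atoms:
  assumes "\<Gamma> @ \<Delta> = \<Gamma>' @ \<Delta>'" and "length (ctx_atoms \<Gamma>) = length (ctx_atoms \<Gamma>')"
  shows "\<Gamma> = \<Gamma>'"
  using assms
proof (induction \<Gamma> arbitrary: \<Gamma>')
  case Nil
  then show ?case by (cases \<Gamma>') (auto simp: ctx_atoms_def atoms_not_Nil)
next
  case (Cons F \<Gamma>)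
  then show ?case by (cases \<Gamma>') (auto simp: ctx_atoms_def atoms_not_Nil)
qed

lemma fwf_ctx_atoms_fconcl:
  "fwf d \<Longrightarrow> ctx_atoms (fst (fconcl d)) = atoms (snd (fconcl d))"
  by (induction d) (auto simp: ctx_atoms_def)

lemma fwf_fconcl_ctx_not_Nil: "fwf d \<Longrightarrow> fst (fconcl d) \<noteq> []"
  using fwf_ctx_atoms_fconcl[of d] ctx_atoms_eq_Nil_iff atoms_not_Nil by metis

lemma fwf_fconcl_inj:
  "fwf d \<Longrightarrow> fwf d' \<Longrightarrow> fconcl d = fconcl d' \<Longrightarrow> d = d'"
proof (induction d arbitrary: d')
  case (IdAtm p)
  then show ?case by (cases d') auto
next
  case (ProdL A B \<Delta> C d)
  then show ?case
  proof (cases d')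
    case (ProdRfoc \<Gamma>' \<Delta>' A' B' d1' d2')
    with ProdL have "\<Gamma>' \<noteq> []" using fwf_fconcl_ctx_not_Nil[of d1'] by auto
    with ProdL ProdRfoc show ?thesis by (cases \<Gamma>') auto
  qed auto
next
  case (ProdRfoc \<Gamma> \<Delta> A B d1 d2)
  have "\<Gamma> \<noteq> []" using fwf_fconcl_ctx_not_Nil[of d1] ProdRfoc.prems by auto
  show ?case
  proof (cases d')
    case (IdAtm p)
    then show ?thesis using ProdRfoc.prems by auto
  next
    case ProdL
    then show ?thesis using ProdRfoc.prems \<open>\<Gamma> \<noteq> []\<close> by (cases \<Gamma>) auto
  next
    case (ProdRfoc \<Gamma>' \<Delta>' A' B' d1' d2')
    note prems = ProdRfoc.prems[unfolded ProdRfoc]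
    have ctx: "\<Gamma> @ \<Delta> = \<Gamma>' @ \<Delta>'" and goal: "A' = A" "B' = B" using prems by auto
    have "ctx_atoms \<Gamma> = atoms A" "ctx_atoms \<Gamma>' = atoms A"
      using fwf_ctx_atoms_fconcl[of d1] fwf_ctx_atoms_fconcl[of d1'] prems goal by auto
    then have "\<Gamma> = \<Gamma>'" using append_eq_append_ctx_atoms[OF ctx] by simp
    moreover from ctx this have "\<Delta> = \<Delta>'" by simp
    ultimately have "d1 = d1'" "d2 = d2'"
      using ProdRfoc.IH(1)[of d1'] ProdRfoc.IH(2)[of d2'] prems goal by auto
    with \<open>\<Gamma> = \<Gamma>'\<close> \<open>\<Delta> = \<Delta>'\<close> goal ProdRfoc show ?thesis by simp
  qed
qed

inductive fderivable :: "'a fma list \<Rightarrow> 'a fma \<Rightarrow> bool" where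
  idAtm: "fderivable [At p] (At p)"
| prodL: "fderivable (A # B # \<Delta>) C \<Longrightarrow> fderivable (Prod A B # \<Delta>) C"
| prodRfoc: "irreducible \<Gamma> \<Longrightarrow> fderivable \<Gamma> A \<Longrightarrow> fderivable \<Delta> B
    \<Longrightarrow> fderivable (\<Gamma> @ \<Delta>) (Prod A B)"

lemma fderivable_imp_focused_derivation:
  "fderivable \<Gamma> A \<Longrightarrow> \<exists>d. focused_derivation_of d \<Gamma> A"
proof (induction rule: fderivable.induct)
  case (idAtm p)
  show ?case by (auto simp: focused_derivation_of_def intro!: exI[of _ "IdAtm p"])
next
  case (prodL A B \<Delta> C)
  then obtain d where "focused_derivation_of d (A # B # \<Delta>) C" by blast
  then show ?case
    by (auto simp: focused_derivation_of_def intro!: exI[of _ "ProdL A B \<Delta> C d"])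
next
  case (prodRfoc \<Gamma> A \<Delta> B)
  then obtain d1 d2 where "focused_derivation_of d1 \<Gamma> A" "focused_derivation_of d2 \<Delta> B"
    by blast
  with prodRfoc.hyps(1) show ?case
    by (auto simp: focused_derivation_of_def intro!: exI[of _ "ProdRfoc \<Gamma> \<Delta> A B d1 d2"])
qed

lemma fderivable_ctx_not_Nil: "fderivable \<Gamma> A \<Longrightarrow> \<Gamma> \<noteq> []"
  by (induction rule: fderivable.induct) auto

lemma fderivable_prodR:
  "fderivable \<Gamma> A \<Longrightarrow> fderivable \<Delta> B \<Longrightarrow> fderivable (\<Gamma> @ \<Delta>) (Prod A B)"
proof (induction \<Gamma> A arbitrary: \<Delta> rule: fderivable.induct)
  case (idAtm p)
  then show ?case using fderivable.prodRfoc[of "[At p]"] fderivable.idAtm by fastforce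
next
  case prodL
  then show ?case using fderivable.prodL by fastforce
next
  case (prodRfoc \<Gamma> A \<Delta>' B')
  have "irreducible (\<Gamma> @ \<Delta>')"
    using prodRfoc.hyps(1) fderivable_ctx_not_Nil[OF prodRfoc.hyps(2)]
    by (cases \<Gamma> rule: irreducible.cases) auto
  then show ?case
    using fderivable.prodRfoc[OF _ fderivable.prodRfoc[OF prodRfoc.hyps] prodRfoc.prems]
    by simp
qed

lemma fderivable_id: "fderivable [A] A"
proof (induction A)
  case (At p)
  show ?case by (rule idAtm)
next
  case (Prod A B)
  then show ?case using fderivable_prodR[of "[A]" A "[B]" B] fderivable.prodL by fastforce
qed

definition cut_admissible :: "'a fma \<Rightarrow> bool" where
  "cut_admissible A \<longleftrightarrow> (\<forall>\<Theta> \<Gamma> \<Delta> B.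
     fderivable \<Theta> A \<longrightarrow> fderivable (\<Gamma> @ A # \<Delta>) B \<longrightarrow> fderivable (\<Gamma> @ \<Theta> @ \<Delta>) B)"

text \<open>The left premise may end with (prod L) or (prod R foc); in the latter case its two halves
  are cut against the two factors in turn.\<close>
lemma cut_principal_prod:
  assumes "cut_admissible A" "cut_admissible B"
    and "fderivable \<Theta> (Prod A B)" and "fderivable (A # B # \<Delta>) C"
  shows "fderivable (\<Theta> @ \<Delta>) C"
  using assms(3,4)
proof (induction \<Theta> "Prod A B" arbitrary: \<Delta> rule: fderivable.induct)
  case prodL
  then show ?case using fderivable.prodL by fastforce
next
  case (prodRfoc \<Gamma> \<Delta>')
  have "fderivable (\<Gamma> @ B # \<Delta>) C"
    using assms(1)[unfolded cut_admissible_def, rule_format, of \<Gamma> "[]" "B # \<Delta>"]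
      prodRfoc.hyps(2) prodRfoc.prems by simp
  then show ?case
    using assms(2)[unfolded cut_admissible_def, rule_format, of \<Delta>' \<Gamma> \<Delta>]
      prodRfoc.hyps(4) by simp
qed

text \<open>Commutative cases: the cut moves up the right premise until the cut formula becomes
  principal, which for a product is the hypothesis and for an atom happens only at (id atm).\<close>
lemma cut_admissible_if_principal:
  assumes principal: "\<And>A1 A2 \<Theta> \<Delta> C. A = Prod A1 A2 \<Longrightarrow> fderivable \<Theta> A
      \<Longrightarrow> fderivable (A1 # A2 # \<Delta>) C \<Longrightarrow> fderivable (\<Theta> @ \<Delta>) C"
  shows "cut_admissible A"
  unfolding cut_admissible_def
proof (intro allI impI)
  fix \<Theta> \<Gamma> \<Delta> B
  assume left: "fderivable \<Theta> A"
  assume "fderivable (\<Gamma> @ A # \<Delta>) B"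
  then show "fderivable (\<Gamma> @ \<Theta> @ \<Delta>) B"
  proof (induction "\<Gamma> @ A # \<Delta>" B arbitrary: \<Gamma> \<Delta> rule: fderivable.induct)
    case idAtm
    then show ?case using left by (cases \<Gamma>) auto
  next
    case (prodL A' B' \<Delta>' C)
    show ?case
    proof (cases \<Gamma>)
      case Nil
      then have "A = Prod A' B'" "\<Delta>' = \<Delta>" using prodL.hyps(3) by simp_all
      then show ?thesis using principal[OF _ left] prodL.hyps(1) Nil by simp
    next
      case (Cons F \<Gamma>')
      then have "F = Prod A' B'" "\<Delta>' = \<Gamma>' @ A # \<Delta>" using prodL.hyps(3) by auto
      then show ?thesis
        using prodL.hyps(2)[of "A' # B' # \<Gamma>'" \<Delta>] Cons fderivable.prodL by simp
    qed
  next
    case (prodRfoc \<Gamma>1 A' \<Delta>1 B')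
    note focus = fderivable.prodRfoc[OF prodRfoc.hyps(1)]
    obtain us where "\<Gamma>1 = \<Gamma> @ us \<and> us @ \<Delta>1 = A # \<Delta> \<or> \<Gamma>1 @ us = \<Gamma> \<and> \<Delta>1 = us @ A # \<Delta>"
      using prodRfoc.hyps(6) unfolding append_eq_append_conv2 by blast
    then show ?case
    proof (elim disjE conjE)
      assume \<Gamma>1: "\<Gamma>1 = \<Gamma> @ us" and "us @ \<Delta>1 = A # \<Delta>"
      then consider "us = []" "\<Delta>1 = A # \<Delta>" | us' where "us = A # us'" "\<Delta> = us' @ \<Delta>1"
        by (cases us) auto
      then show ?thesis
      proof cases
        case 1
        then show ?thesis
          using focus[OF prodRfoc.hyps(2) prodRfoc.hyps(5)[of "[]" \<Delta>]] \<Gamma>1 by simp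
      next
        case 2
        then have "fderivable (\<Gamma> @ \<Theta> @ us') A'"
          using prodRfoc.hyps(3) \<Gamma>1 by simp
        then show ?thesis
          using fderivable_prodR[OF _ prodRfoc.hyps(4)] 2 by fastforce
      qed
    next
      assume "\<Gamma>1 @ us = \<Gamma>" and "\<Delta>1 = us @ A # \<Delta>"
      then show ?thesis
        using focus[OF prodRfoc.hyps(2) prodRfoc.hyps(5)[of us \<Delta>]] by auto
    qed
  qed
qed

lemma cut_admissible: "cut_admissible A"
proof (induction A)
  case At
  show ?case by (rule cut_admissible_if_principal) simp
next
  case (Prod A B)
  then show ?case by (intro cut_admissible_if_principal) (auto intro: cut_principal_prod)
qed

lemma derivable_imp_fderivable: "derivable \<Gamma> A \<Longrightarrow> fderivable \<Gamma> A"
proof (induction rule: derivable.induct)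
  case (cut \<Theta> A \<Gamma> \<Delta> B)
  then show ?case using cut_admissible[of A] unfolding cut_admissible_def by blast
qed (auto intro: fderivable_id fderivable.prodL fderivable_prodR)

theorem theorem1p17:
  fixes \<Gamma> :: "'a fma list" and A :: "'a fma"
  assumes "derivable \<Gamma> A"
  shows "\<exists>!d. focused_derivation_of d \<Gamma> A"
proof -
  obtain d where "focused_derivation_of d \<Gamma> A"
    using fderivable_imp_focused_derivation derivable_imp_fderivable assms by blast
  moreover have "d' = d" if "focused_derivation_of d' \<Gamma> A" for d'
    using that \<open>focused_derivation_of d \<Gamma> A\<close> fwf_fconcl_inj
    unfolding focused_derivation_of_def by metis
  ultimately show ?thesis by blast
qed

end
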